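(* Let $\widehat{\mathscr{O}}$ be a commutative local principal ideal ring, complete with respect to its unique maximal ideal $\mathfrak{m}=(\pi)$, with residue field $k$ of characteristic other than $2$. Let $A\in\mathrm{M}_n(\widehat{\mathscr{O}})$ be cyclic, and let $F\in\widehat{\mathscr{O}}[x_1,\dots,x_m]$ (commuting variables) be a monic polynomial of degree $d$, with reduction $\overline{F}\in k[x_1,\dots,x_m]$. Suppose there is $\widetilde{\mathbf B}=(\widetilde{B}_1,\dots,\widetilde{B}_m)\in\mathrm{M}_n(k)^m$ with $\widetilde B_i\widetilde B_j=\widetilde B_j\widetilde B_i$ for all $i,j$, such that $\overline{F}(\widetilde{\mathbf B})=\overline{A}$, and suppose that for some $1\le r\le m$ one has $\frac{\partial \overline F}{\partial x_i}\big|_{\widetilde{\mathbf B}}\in\mathrm{GL}_n(k)$ for $i=1,\dots,r$ and $\frac{\partial \overline F}{\partial x_i}\big|_{\widetilde{\mathbf B}}=0\in\mathrm{M}_n(k)$ for $i=r+1,\dots,m$. Then there exists a tuple $\mathbf B=(B_1,\dots,B_m)\in\mathrm{M}_n(\widehat{\mathscr{O}})^m$ of pairwise commuting matrices such that $\overline{B_i}=\widetilde B_i$ for each $i=1,\dots,m$ and $F(\mathbf B)=A$.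
   Context: Bars denote reduction modulo $\mathfrak m$ (entrywise for matrices, coefficientwise for polynomials). $A\in\mathrm{M}_n(\widehat{\mathscr O})$ is called cyclic if $\overline{A}\in\mathrm{M}_n(k)$ is cyclic, i.e. $k^n$ is a cyclic $k[t]$-module via $\overline A$. Completeness means $\widehat{\mathscr O}\to\varprojlim_j\widehat{\mathscr O}/\mathfrak m^j$ is an isomorphism. Evaluation of a polynomial in commuting variables at a tuple of pairwise commuting matrices is by substitution. *)

theory Defs
  imports "HOL-Analysis.Analysis" "HOL-Library.Poly_Mapping"
begin

text \<open>Multivariate polynomials over a commutative ring 'a in the variables x_0, x_1, ...
  (indexed by nat): finitely supported maps from monomials (exponent vectors
  nat finitely supported) to coefficients.\<close>
type_synonym 'a mpoly = "(nat \<Rightarrow>\<^sub>0 nat) \<Rightarrow>\<^sub>0 'a"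

definition mdeg :: "(nat \<Rightarrow>\<^sub>0 nat) \<Rightarrow> nat" where
  "mdeg \<alpha> = (\<Sum>i\<in>Poly_Mapping.keys \<alpha>. Poly_Mapping.lookup \<alpha> i)"

definition deglex_less :: "(nat \<Rightarrow>\<^sub>0 nat) \<Rightarrow> (nat \<Rightarrow>\<^sub>0 nat) \<Rightarrow> bool" where
  "deglex_less \<beta> \<alpha> \<longleftrightarrow> mdeg \<beta> < mdeg \<alpha> \<or>
     (mdeg \<beta> = mdeg \<alpha> \<and> (\<exists>i. Poly_Mapping.lookup \<beta> i < Poly_Mapping.lookup \<alpha> i \<and> (\<forall>j<i. Poly_Mapping.lookup \<beta> j = Poly_Mapping.lookup \<alpha> j)))"

definition monic_deg :: "'a::comm_ring_1 mpoly \<Rightarrow> nat \<Rightarrow> bool" where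
  "monic_deg F d \<longleftrightarrow> (\<exists>\<alpha>\<in>Poly_Mapping.keys F. Poly_Mapping.lookup F \<alpha> = 1 \<and> mdeg \<alpha> = d \<and>
     (\<forall>\<beta>\<in>Poly_Mapping.keys F. \<beta> \<noteq> \<alpha> \<longrightarrow> deglex_less \<beta> \<alpha>))"

definition pderiv_m :: "nat \<Rightarrow> 'a::comm_ring_1 mpoly \<Rightarrow> 'a mpoly" where
  "pderiv_m i p = Abs_poly_mapping
     (\<lambda>\<beta>. of_nat (Suc (Poly_Mapping.lookup \<beta> i)) * Poly_Mapping.lookup p (\<beta> + Poly_Mapping.single i 1))"

definition matpow :: "'a::semiring_1^'n^'n \<Rightarrow> nat \<Rightarrow> 'a^'n^'n" where
  "matpow M k = ((\<lambda>P. M ** P) ^^ k) (mat 1)"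

definition mono_eval :: "(nat \<Rightarrow>\<^sub>0 nat) \<Rightarrow> (nat \<Rightarrow> 'a::comm_ring_1^'n^'n) \<Rightarrow> 'a^'n^'n" where
  "mono_eval \<alpha> B = foldr (\<lambda>i P. matpow (B i) (Poly_Mapping.lookup \<alpha> i) ** P)
      (sorted_list_of_set (Poly_Mapping.keys \<alpha>)) (mat 1)"

definition mpoly_eval :: "'a::comm_ring_1 mpoly \<Rightarrow> (nat \<Rightarrow> 'a^'n^'n) \<Rightarrow> 'a^'n^'n" where
  "mpoly_eval p B = (\<Sum>\<alpha>\<in>Poly_Mapping.keys p. mat (Poly_Mapping.lookup p \<alpha>) ** mono_eval \<alpha> B)"

definition map_matrix :: "('a \<Rightarrow> 'b) \<Rightarrow> 'a^'n^'m \<Rightarrow> 'b^'n^'m" where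
  "map_matrix f M = (\<chi> i j. f (M $ i $ j))"

definition cyclic_mat :: "'k::field^'n^'n \<Rightarrow> bool" where
  "cyclic_mat M \<longleftrightarrow> (\<exists>v. vec.span (range (\<lambda>j. matpow M j *v v)) = UNIV)"

definition is_ideal :: "'a::comm_ring_1 set \<Rightarrow> bool" where
  "is_ideal I \<longleftrightarrow> 0 \<in> I \<and> (\<forall>x\<in>I. \<forall>y\<in>I. x + y \<in> I) \<and> (\<forall>a. \<forall>x\<in>I. a * x \<in> I)"

definition principal_ideal_ring :: "'a::comm_ring_1 itself \<Rightarrow> bool" where
  "principal_ideal_ring _ \<longleftrightarrow> (\<forall>I::'a set. is_ideal I \<longrightarrow> (\<exists>g. I = {g * a |a. True}))"

text \<open>m = (\<pi>), m^j = (\<pi>^j). Completeness: the natural map to the inverse limit of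
  the O/m^j is bijective (injective: separated; surjective: every compatible
  system of residues, given by representatives, comes from an element).\<close>
definition complete_wrt :: "'a::comm_ring_1 \<Rightarrow> bool" where
  "complete_wrt \<pi> \<longleftrightarrow>
     (\<forall>x. (\<forall>j. \<pi> ^ j dvd x) \<longrightarrow> x = 0) \<and>
     (\<forall>y::nat \<Rightarrow> 'a. (\<forall>j. \<pi> ^ j dvd (y (Suc j) - y j)) \<longrightarrow>
        (\<exists>x. \<forall>j. \<pi> ^ j dvd (x - y j)))"

definition residue_map :: "'a::comm_ring_1 \<Rightarrow> ('a \<Rightarrow> 'k::field) \<Rightarrow> bool" where
  "residue_map \<pi> red \<longleftrightarrow> red 0 = 0 \<and> red 1 = 1 \<and> (\<forall>x y. red (x + y) = red x + red y) \<and>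
     (\<forall>x y. red (x * y) = red x * red y) \<and> surj red \<and> (\<forall>x. red x = 0 \<longleftrightarrow> \<pi> dvd x)"

end

theory Submission
  imports Defs
begin

text \<open>
  Since the reduction of A is cyclic, every
  matrix over k commuting with it is a polynomial in it and hence lifts to a polynomial in A. So the
  tuple B~ lifts to a tuple in the bicommutant of A, a commutative ring of matrices that is closed
  under \<pi>-adic limits, and so does the inverse of the reduced partial derivative dF/dx_0 at B~.
  Only the entry in x_0 is then corrected, by the chord iteration
  X_(k+1) = X_k - U G(X_k) with G(X) = F(X, B_1, B_2, ...) - A and U the lifted inverse:
  G(X_(k+1)) = G(X_k) (1 - U D_k) where D_k, a divided difference of F in x_0, reduces to dF/dx_0,
  so each step gains a factor \<pi> and completeness yields an exact root.
\<close>

lemma matrix_add_rdistrib: "((A::'a::semiring_1^'n^'m) + B) ** (C::'a^'p^'n) = A ** C + B ** C"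
  by (vector matrix_matrix_mult_def sum.distrib[symmetric] field_simps)

lemma matrix_diff_ldistrib: "(A::'a::ring_1^'n^'m) ** (B - C) = A ** B - A ** (C::'a^'p^'n)"
  by (vector matrix_matrix_mult_def sum_subtractf[symmetric] field_simps)

lemma matrix_diff_rdistrib: "((A::'a::ring_1^'n^'m) - B) ** (C::'a^'p^'n) = A ** C - B ** C"
  by (vector matrix_matrix_mult_def sum_subtractf[symmetric] field_simps)

lemma matrix_mult_sum_left: "(M::'a::semiring_1^'n^'m) ** sum (f::_ \<Rightarrow> 'a^'p^'n) S = (\<Sum>x\<in>S. M ** f x)"
  by (induction S rule: infinite_finite_induct) (auto simp: matrix_add_ldistrib)

lemma mat_matrix_mult: "mat (c::'a::semiring_1) ** (M::'a^'n^'m) = (\<chi> i j. c * M $ i $ j)"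
  by (simp add: matrix_matrix_mult_def mat_def vec_eq_iff if_distrib if_distribR sum.delta' cong: if_cong)

lemma mat_matrix_mult_commute: "mat (c::'a::comm_semiring_1) ** (M::'a^'n^'n) = M ** mat c"
  by (simp add: mat_matrix_mult matrix_matrix_mult_def mat_def vec_eq_iff if_distrib if_distribR
      sum.delta' mult.commute cong: if_cong)

lemma mat_mult_mat: "mat (a::'a::comm_semiring_1) ** (mat b :: 'a^'n^'n) = mat (a * b)"
  unfolding mat_matrix_mult by (simp add: vec_eq_iff mat_def)

lemma mat_add_mat: "mat (a::'a::semiring_1) + (mat b :: 'a^'n^'n) = mat (a + b)"
  by (simp add: vec_eq_iff mat_def)

lemma mat_matrix_vector_mult: "(mat (c::'a::comm_semiring_1) ** M) *v v = c *s (M *v v)"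
  by (simp add: mat_matrix_mult matrix_vector_mult_def vec_eq_iff sum_distrib_left mult.assoc)

lemma matrix_vector_mult_sum: "(\<Sum>x\<in>S. f x) *v (v::'a::semiring_1^'n) = (\<Sum>x\<in>S. f x *v v)"
  by (induction S rule: infinite_finite_induct) (auto simp: matrix_vector_mult_add_rdistrib)

lemma matpow_0 [simp]: "matpow M 0 = mat 1"
  by (simp add: matpow_def)

lemma matpow_Suc: "matpow M (Suc k) = M ** matpow M k"
  by (simp add: matpow_def)

section \<open>Commutants\<close>

definition commutant :: "('a::comm_ring_1^'n^'n) set \<Rightarrow> ('a^'n^'n) set" where
  "commutant S = {M. \<forall>N\<in>S. N ** M = M ** N}"

abbreviation bicommutant :: "'a::comm_ring_1^'n^'n \<Rightarrow> ('a^'n^'n) set" where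
  "bicommutant A \<equiv> commutant (commutant {A})"

lemma commutant_iff: "M \<in> commutant S \<longleftrightarrow> (\<forall>N\<in>S. N ** M = M ** N)"
  by (simp add: commutant_def)

lemma commutant_mat: "mat c \<in> commutant S"
  by (simp add: commutant_iff mat_matrix_mult_commute)

lemma commutant_add: "M \<in> commutant S \<Longrightarrow> M' \<in> commutant S \<Longrightarrow> M + M' \<in> commutant S"
  by (simp add: commutant_iff matrix_add_ldistrib matrix_add_rdistrib)

lemma commutant_diff: "M \<in> commutant S \<Longrightarrow> M' \<in> commutant S \<Longrightarrow> M - M' \<in> commutant S"
  by (simp add: commutant_iff matrix_diff_ldistrib matrix_diff_rdistrib)

lemma commutant_mult: "M \<in> commutant S \<Longrightarrow> M' \<in> commutant S \<Longrightarrow> M ** M' \<in> commutant S"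
  by (simp add: commutant_iff matrix_mul_assoc) (metis matrix_mul_assoc)

lemma commutant_sum: "(\<And>x. x \<in> I \<Longrightarrow> f x \<in> commutant S) \<Longrightarrow> sum f I \<in> commutant S"
  by (induction I rule: infinite_finite_induct) (auto intro: commutant_add commutant_mat[of 0, simplified])

lemma commutant_matpow: "M \<in> commutant S \<Longrightarrow> matpow M k \<in> commutant S"
  by (induction k) (auto simp: matpow_Suc intro: commutant_mult commutant_mat)

lemma commutant_inverse:
  assumes "D \<in> commutant S" "D ** D' = mat 1" "D' ** D = mat 1"
  shows "D' \<in> commutant S"
  unfolding commutant_iff
proof
  fix N assume "N \<in> S"
  then have "D ** N = N ** D" using assms(1) by (simp add: commutant_iff)
  then have "D' ** (D ** N) ** D' = D' ** (N ** D) ** D'" by simp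
  then show "N ** D' = D' ** N"
    using assms(2,3) by (metis matrix_mul_assoc matrix_mul_lid matrix_mul_rid)
qed

lemma self_in_bicommutant: "A \<in> bicommutant A"
  by (simp add: commutant_iff)

lemma bicommutant_commute:
  assumes "M \<in> bicommutant A" "M' \<in> bicommutant A"
  shows "M ** M' = M' ** M"
proof -
  have "M' \<in> commutant {A}"
    using assms(2) self_in_bicommutant[of A] by (simp add: commutant_iff)
  then show ?thesis using assms(1) by (simp add: commutant_iff)
qed

section \<open>Evaluating polynomials at matrices\<close>

lemma mono_eval_cong:
  "(\<And>i. i \<in> Poly_Mapping.keys \<alpha> \<Longrightarrow> B i = B' i) \<Longrightarrow> mono_eval \<alpha> B = mono_eval \<alpha> B'"
  unfolding mono_eval_def by (rule foldr_cong) auto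

lemma mpoly_eval_cong:
  "(\<And>\<alpha> i. \<alpha> \<in> Poly_Mapping.keys p \<Longrightarrow> i \<in> Poly_Mapping.keys \<alpha> \<Longrightarrow> B i = B' i) \<Longrightarrow>
    mpoly_eval p B = mpoly_eval p B'"
  unfolding mpoly_eval_def by (rule sum.cong[OF refl]) (metis mono_eval_cong)

lemma sum_keys_superset:
  assumes "finite S" "Poly_Mapping.keys p \<subseteq> S"
  shows "(\<Sum>\<alpha>\<in>Poly_Mapping.keys p. mat (Poly_Mapping.lookup p \<alpha>) ** f \<alpha>) =
    (\<Sum>\<alpha>\<in>S. mat (Poly_Mapping.lookup p \<alpha>) ** (f \<alpha> :: 'a::comm_ring_1^'n^'n))"
  by (rule sum.mono_neutral_left[OF assms]) (auto simp: in_keys_iff)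

lemma commutant_foldr_matpow:
  "(\<And>i. i \<in> set xs \<Longrightarrow> B i \<in> commutant S) \<Longrightarrow>
    foldr (\<lambda>i P. matpow (B i) (g i) ** P) xs (mat 1) \<in> commutant S"
  by (induction xs) (auto intro: commutant_mult commutant_matpow commutant_mat)

lemma commutant_mono_eval:
  "(\<And>i. i \<in> Poly_Mapping.keys \<alpha> \<Longrightarrow> B i \<in> commutant S) \<Longrightarrow> mono_eval \<alpha> B \<in> commutant S"
  unfolding mono_eval_def by (rule commutant_foldr_matpow) auto

lemma commutant_mpoly_eval:
  "(\<And>\<alpha> i. \<alpha> \<in> Poly_Mapping.keys p \<Longrightarrow> i \<in> Poly_Mapping.keys \<alpha> \<Longrightarrow> B i \<in> commutant S) \<Longrightarrow>
    mpoly_eval p B \<in> commutant S"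
  unfolding mpoly_eval_def
  by (intro commutant_sum commutant_mult commutant_mat commutant_mono_eval) auto

lemma mpoly_eval_commute:
  assumes "\<forall>\<alpha>\<in>Poly_Mapping.keys p. Poly_Mapping.keys \<alpha> \<subseteq> {..<m}"
    and "\<forall>j<m. B i ** B j = B j ** B i"
  shows "mpoly_eval p B ** B i = B i ** mpoly_eval p B"
proof -
  have "mpoly_eval p B \<in> commutant {B i}"
    using assms by (intro commutant_mpoly_eval) (auto simp: commutant_iff)
  then show ?thesis by (simp add: commutant_iff)
qed

locale comm_ring_hom =
  fixes \<phi> :: "'a::comm_ring_1 \<Rightarrow> 'b::comm_ring_1"
  assumes hom_add [simp]: "\<phi> (x + y) = \<phi> x + \<phi> y"
    and hom_mult [simp]: "\<phi> (x * y) = \<phi> x * \<phi> y"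
    and hom_one [simp]: "\<phi> 1 = 1"
begin

lemma hom_zero [simp]: "\<phi> 0 = 0"
  using hom_add[of 0 0] by simp

lemma hom_uminus [simp]: "\<phi> (- x) = - \<phi> x"
  using hom_add[of "- x" x] by (simp add: eq_neg_iff_add_eq_0)

lemma hom_diff [simp]: "\<phi> (x - y) = \<phi> x - \<phi> y"
  using hom_add[of x "- y"] by simp

lemma hom_sum [simp]: "\<phi> (sum f I) = (\<Sum>x\<in>I. \<phi> (f x))"
  by (induction I rule: infinite_finite_induct) auto

lemma lookup_map_poly: "Poly_Mapping.lookup (Poly_Mapping.map \<phi> p) \<alpha> = \<phi> (Poly_Mapping.lookup p \<alpha>)"
  by (simp add: map.rep_eq when_def)

lemma keys_map_poly: "Poly_Mapping.keys (Poly_Mapping.map \<phi> p) \<subseteq> Poly_Mapping.keys p"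
  by (auto simp: in_keys_iff lookup_map_poly)

lemma map_matrix_mult: "map_matrix \<phi> ((M::'a^'n^'m) ** (N::'a^'p^'n)) = map_matrix \<phi> M ** map_matrix \<phi> N"
  by (simp add: map_matrix_def matrix_matrix_mult_def)

lemma map_matrix_add: "map_matrix \<phi> ((M::'a^'n^'m) + N) = map_matrix \<phi> M + map_matrix \<phi> N"
  by (simp add: map_matrix_def vec_eq_iff)

lemma map_matrix_mat: "map_matrix \<phi> (mat c :: 'a^'n^'n) = mat (\<phi> c)"
  by (simp add: map_matrix_def vec_eq_iff mat_def)

lemma map_matrix_sum: "map_matrix \<phi> (sum (f::_ \<Rightarrow> 'a^'n^'m) I) = (\<Sum>x\<in>I. map_matrix \<phi> (f x))"
  by (simp add: map_matrix_def vec_eq_iff)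

lemma map_matrix_matpow: "map_matrix \<phi> (matpow (M::'a^'n^'n) k) = matpow (map_matrix \<phi> M) k"
  by (induction k) (auto simp: map_matrix_mat matpow_Suc map_matrix_mult)

lemma map_matrix_foldr_matpow:
  "map_matrix \<phi> (foldr (\<lambda>i P. matpow ((B::nat \<Rightarrow> 'a^'n^'n) i) (g i) ** P) xs (mat 1)) =
    foldr (\<lambda>i P. matpow (map_matrix \<phi> (B i)) (g i) ** P) xs (mat 1)"
  by (induction xs) (auto simp: map_matrix_mult map_matrix_matpow map_matrix_mat)

lemma map_matrix_mono_eval:
  "map_matrix \<phi> (mono_eval \<alpha> (B::nat \<Rightarrow> 'a^'n^'n)) = mono_eval \<alpha> (\<lambda>i. map_matrix \<phi> (B i))"
  unfolding mono_eval_def by (rule map_matrix_foldr_matpow)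

lemma map_matrix_mpoly_eval:
  "map_matrix \<phi> (mpoly_eval p (B::nat \<Rightarrow> 'a^'n^'n)) =
    mpoly_eval (Poly_Mapping.map \<phi> p) (\<lambda>i. map_matrix \<phi> (B i))"
proof -
  have "mpoly_eval (Poly_Mapping.map \<phi> p) (\<lambda>i. map_matrix \<phi> (B i)) =
    (\<Sum>\<alpha>\<in>Poly_Mapping.keys p. mat (Poly_Mapping.lookup (Poly_Mapping.map \<phi> p) \<alpha>) **
      mono_eval \<alpha> (\<lambda>i. map_matrix \<phi> (B i)))"
    unfolding mpoly_eval_def by (rule sum_keys_superset[OF finite_keys keys_map_poly])
  then show ?thesis
    by (simp add: mpoly_eval_def map_matrix_sum map_matrix_mult map_matrix_mat map_matrix_mono_eval
        lookup_map_poly)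
qed

end

lemma residue_map_comm_ring_hom: "residue_map \<pi> red \<Longrightarrow> comm_ring_hom red"
  by (simp add: residue_map_def comm_ring_hom_def)

lemma residue_map_surj: "residue_map \<pi> red \<Longrightarrow> surj red"
  by (simp add: residue_map_def)

section \<open>Divided differences in the variable x_0\<close>

definition mono_eval_tail :: "(nat \<Rightarrow>\<^sub>0 nat) \<Rightarrow> (nat \<Rightarrow> 'a::comm_ring_1^'n^'n) \<Rightarrow> 'a^'n^'n" where
  "mono_eval_tail \<alpha> B = foldr (\<lambda>i P. matpow (B i) (Poly_Mapping.lookup \<alpha> i) ** P)
      (sorted_list_of_set (Poly_Mapping.keys \<alpha> - {0})) (mat 1)"

lemma mono_eval_split_0:
  "mono_eval \<alpha> B = matpow (B 0) (Poly_Mapping.lookup \<alpha> 0) ** mono_eval_tail \<alpha> B"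
proof (cases "0 \<in> Poly_Mapping.keys \<alpha>")
  case True
  then have "Min (Poly_Mapping.keys \<alpha>) = 0" "Poly_Mapping.keys \<alpha> \<noteq> {}"
    by (auto intro: Min_eqI)
  then have "sorted_list_of_set (Poly_Mapping.keys \<alpha>) =
      0 # sorted_list_of_set (Poly_Mapping.keys \<alpha> - {0})"
    using sorted_list_of_set_nonempty[OF finite_keys] by metis
  then show ?thesis by (simp add: mono_eval_def mono_eval_tail_def)
next
  case False
  then have "Poly_Mapping.lookup \<alpha> 0 = 0" "Poly_Mapping.keys \<alpha> - {0} = Poly_Mapping.keys \<alpha>"
    by (auto simp: in_keys_iff)
  then show ?thesis by (simp add: mono_eval_def mono_eval_tail_def)
qed

lemma mono_eval_tail_cong:
  assumes "\<And>i. i \<noteq> 0 \<Longrightarrow> Poly_Mapping.lookup \<alpha> i = Poly_Mapping.lookup \<alpha>' i"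
    and "\<And>i. i \<noteq> 0 \<Longrightarrow> i \<in> Poly_Mapping.keys \<alpha> \<Longrightarrow> B i = B' i"
  shows "mono_eval_tail \<alpha> B = mono_eval_tail \<alpha>' B'"
proof -
  have keys: "Poly_Mapping.keys \<alpha>' - {0} = Poly_Mapping.keys \<alpha> - {0}"
    using assms(1) by (auto simp: in_keys_iff)
  show ?thesis
    unfolding mono_eval_tail_def keys by (rule foldr_cong) (auto simp: assms)
qed

lemma mono_eval_tail_fun_upd_0 [simp]: "mono_eval_tail \<alpha> (B(0 := Y)) = mono_eval_tail \<alpha> B"
  by (rule mono_eval_tail_cong) auto

lemma commutant_mono_eval_tail:
  "(\<And>i. B i \<in> commutant S) \<Longrightarrow> mono_eval_tail \<alpha> B \<in> commutant S"
  unfolding mono_eval_tail_def by (rule commutant_foldr_matpow)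

lemma (in comm_ring_hom) map_matrix_mono_eval_tail:
  "map_matrix \<phi> (mono_eval_tail \<alpha> B) = mono_eval_tail \<alpha> (\<lambda>i. map_matrix \<phi> (B i))"
  unfolding mono_eval_tail_def by (rule map_matrix_foldr_matpow)

fun matpow_diff_quot :: "nat \<Rightarrow> 'a::comm_ring_1^'n^'n \<Rightarrow> 'a^'n^'n \<Rightarrow> 'a^'n^'n" where
  "matpow_diff_quot 0 X Y = 0"
| "matpow_diff_quot (Suc a) X Y = matpow X a + Y ** matpow_diff_quot a X Y"

lemma matpow_diff_factor:
  assumes "X ** Y = Y ** X"
  shows "matpow X a - matpow Y a = (X - Y) ** matpow_diff_quot a X Y"
proof (induction a)
  case (Suc a)
  have "(X - Y) ** Y = Y ** (X - Y)"
    by (simp add: matrix_diff_ldistrib matrix_diff_rdistrib assms)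
  then have "(X - Y) ** matpow_diff_quot (Suc a) X Y =
      (X - Y) ** matpow X a + Y ** ((X - Y) ** matpow_diff_quot a X Y)"
    by (simp add: matrix_add_ldistrib matrix_mul_assoc)
  also have "\<dots> = (X - Y) ** matpow X a + Y ** (matpow X a - matpow Y a)"
    by (simp add: Suc)
  also have "\<dots> = matpow X (Suc a) - matpow Y (Suc a)"
    by (simp add: matpow_Suc matrix_diff_ldistrib matrix_diff_rdistrib)
  finally show ?case by simp
qed simp

lemma matpow_diff_quot_same: "matpow_diff_quot a Z Z = mat (of_nat a) ** matpow Z (a - 1)"
proof (induction a)
  case (Suc a)
  show ?case
  proof (cases a)
    case (Suc b)
    have "Z ** (mat (of_nat a) ** matpow Z b) = mat (of_nat a) ** matpow Z a"
      by (metis Suc mat_matrix_mult_commute matpow_Suc matrix_mul_assoc)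
    then have "matpow_diff_quot (Suc a) Z Z = mat 1 ** matpow Z a + mat (of_nat a) ** matpow Z a"
      using Suc.IH Suc by simp
    also have "\<dots> = mat (1 + of_nat a) ** matpow Z a"
      by (simp only: matrix_add_rdistrib[symmetric] mat_add_mat)
    finally show ?thesis by (simp add: add.commute)
  qed simp
qed simp

lemma commutant_matpow_diff_quot:
  "X \<in> commutant S \<Longrightarrow> Y \<in> commutant S \<Longrightarrow> matpow_diff_quot a X Y \<in> commutant S"
  by (induction a) (auto intro: commutant_mat[of 0, simplified] commutant_add commutant_mult commutant_matpow)

lemma (in comm_ring_hom) map_matrix_matpow_diff_quot:
  "map_matrix \<phi> (matpow_diff_quot a X Y) = matpow_diff_quot a (map_matrix \<phi> X) (map_matrix \<phi> Y)"
  by (induction a) (auto simp: map_matrix_add map_matrix_mult map_matrix_matpow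
      map_matrix_mat[of 0, simplified])

definition mpoly_diff_quot ::
  "'a::comm_ring_1 mpoly \<Rightarrow> (nat \<Rightarrow> 'a^'n^'n) \<Rightarrow> 'a^'n^'n \<Rightarrow> 'a^'n^'n \<Rightarrow> 'a^'n^'n" where
  "mpoly_diff_quot p B X Y = (\<Sum>\<alpha>\<in>Poly_Mapping.keys p. mat (Poly_Mapping.lookup p \<alpha>) **
      (matpow_diff_quot (Poly_Mapping.lookup \<alpha> 0) X Y ** mono_eval_tail \<alpha> B))"

lemma mpoly_eval_diff_factor:
  assumes "X ** Y = Y ** X"
  shows "mpoly_eval p (B(0 := X)) - mpoly_eval p (B(0 := Y)) = (X - Y) ** mpoly_diff_quot p B X Y"
proof -
  have "mpoly_eval p (B(0 := X)) - mpoly_eval p (B(0 := Y)) =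
      (\<Sum>\<alpha>\<in>Poly_Mapping.keys p. mat (Poly_Mapping.lookup p \<alpha>) **
        ((matpow X (Poly_Mapping.lookup \<alpha> 0) - matpow Y (Poly_Mapping.lookup \<alpha> 0)) **
          mono_eval_tail \<alpha> B))"
    by (simp add: mpoly_eval_def mono_eval_split_0 sum_subtractf[symmetric] matrix_diff_ldistrib
        matrix_diff_rdistrib)
  also have "\<dots> = (\<Sum>\<alpha>\<in>Poly_Mapping.keys p. (X - Y) ** (mat (Poly_Mapping.lookup p \<alpha>) **
      (matpow_diff_quot (Poly_Mapping.lookup \<alpha> 0) X Y ** mono_eval_tail \<alpha> B)))"
    by (intro sum.cong refl) (metis matpow_diff_factor[OF assms] mat_matrix_mult_commute matrix_mul_assoc)
  also have "\<dots> = (X - Y) ** mpoly_diff_quot p B X Y"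
    by (simp add: mpoly_diff_quot_def matrix_mult_sum_left)
  finally show ?thesis .
qed

lemma mpoly_diff_quot_cong:
  "(\<And>\<alpha> i. \<alpha> \<in> Poly_Mapping.keys p \<Longrightarrow> i \<in> Poly_Mapping.keys \<alpha> \<Longrightarrow> B i = B' i) \<Longrightarrow>
    mpoly_diff_quot p B X Y = mpoly_diff_quot p B' X Y"
  unfolding mpoly_diff_quot_def
  by (intro sum.cong refl arg_cong2[where f = "(**)"] mono_eval_tail_cong) auto

lemma commutant_mpoly_diff_quot:
  "(\<And>i. B i \<in> commutant S) \<Longrightarrow> X \<in> commutant S \<Longrightarrow> Y \<in> commutant S \<Longrightarrow>
    mpoly_diff_quot p B X Y \<in> commutant S"
  unfolding mpoly_diff_quot_def
  by (intro commutant_sum commutant_mult commutant_mat commutant_matpow_diff_quot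
      commutant_mono_eval_tail)

lemma (in comm_ring_hom) map_matrix_mpoly_diff_quot:
  "map_matrix \<phi> (mpoly_diff_quot p B X Y) =
    mpoly_diff_quot (Poly_Mapping.map \<phi> p) (\<lambda>i. map_matrix \<phi> (B i)) (map_matrix \<phi> X) (map_matrix \<phi> Y)"
proof -
  have "mpoly_diff_quot (Poly_Mapping.map \<phi> p) (\<lambda>i. map_matrix \<phi> (B i)) (map_matrix \<phi> X) (map_matrix \<phi> Y) =
    (\<Sum>\<alpha>\<in>Poly_Mapping.keys p. mat (Poly_Mapping.lookup (Poly_Mapping.map \<phi> p) \<alpha>) **
      (matpow_diff_quot (Poly_Mapping.lookup \<alpha> 0) (map_matrix \<phi> X) (map_matrix \<phi> Y) **
        mono_eval_tail \<alpha> (\<lambda>i. map_matrix \<phi> (B i))))"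
    unfolding mpoly_diff_quot_def by (rule sum_keys_superset[OF finite_keys keys_map_poly])
  then show ?thesis
    by (simp add: mpoly_diff_quot_def map_matrix_sum map_matrix_mult map_matrix_mat
        map_matrix_matpow_diff_quot map_matrix_mono_eval_tail lookup_map_poly)
qed

lemma lookup_pderiv_m:
  "Poly_Mapping.lookup (pderiv_m i p) \<beta> =
    of_nat (Suc (Poly_Mapping.lookup \<beta> i)) * Poly_Mapping.lookup p (\<beta> + Poly_Mapping.single i 1)"
proof -
  let ?shift = "\<lambda>\<beta>::nat \<Rightarrow>\<^sub>0 nat. \<beta> + Poly_Mapping.single i 1"
  have "inj ?shift" by (rule injI) simp
  then have "finite (?shift -` Poly_Mapping.keys p)" by (rule finite_vimageI[OF finite_keys])
  then have "finite {\<beta>. of_nat (Suc (Poly_Mapping.lookup \<beta> i)) * Poly_Mapping.lookup p (?shift \<beta>) \<noteq> 0}"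
    by (rule rev_finite_subset) (auto simp: in_keys_iff)
  then show ?thesis by (simp add: pderiv_m_def)
qed

lemma mpoly_eval_pderiv_m_0:
  "mpoly_eval (pderiv_m 0 p) B = (\<Sum>\<alpha>\<in>Poly_Mapping.keys p.
      mat (of_nat (Poly_Mapping.lookup \<alpha> 0) * Poly_Mapping.lookup p \<alpha>) **
        (matpow (B 0) (Poly_Mapping.lookup \<alpha> 0 - 1) ** mono_eval_tail \<alpha> B))"
  (is "_ = (\<Sum>\<alpha>\<in>_. ?t \<alpha>)")
proof -
  define s :: "nat \<Rightarrow>\<^sub>0 nat" where "s = Poly_Mapping.single 0 1"
  define T where "T = (\<lambda>\<beta>. \<beta> + s) -` Poly_Mapping.keys p"
  have inj: "inj (\<lambda>\<beta>. \<beta> + s)" by (rule injI) simp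
  have T: "finite T" "Poly_Mapping.keys (pderiv_m 0 p) \<subseteq> T"
    using finite_vimageI[OF finite_keys inj]
    by (auto simp: T_def s_def in_keys_iff lookup_pderiv_m)
  have "mpoly_eval (pderiv_m 0 p) B =
      (\<Sum>\<beta>\<in>T. mat (Poly_Mapping.lookup (pderiv_m 0 p) \<beta>) ** mono_eval \<beta> B)"
    unfolding mpoly_eval_def by (rule sum_keys_superset[OF T])
  also have "\<dots> = (\<Sum>\<beta>\<in>T. ?t (\<beta> + s))"
  proof (rule sum.cong[OF refl])
    fix \<beta>
    have "mono_eval_tail (\<beta> + s) B = mono_eval_tail \<beta> B"
      by (rule mono_eval_tail_cong) (auto simp: s_def lookup_add lookup_single)
    then show "mat (Poly_Mapping.lookup (pderiv_m 0 p) \<beta>) ** mono_eval \<beta> B = ?t (\<beta> + s)"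
      by (simp add: s_def lookup_add lookup_pderiv_m mono_eval_split_0)
  qed
  also have "\<dots> = (\<Sum>\<alpha>\<in>(\<lambda>\<beta>. \<beta> + s) ` T. ?t \<alpha>)"
    by (simp add: sum.reindex inj_on_subset[OF inj])
  also have "\<dots> = (\<Sum>\<alpha>\<in>Poly_Mapping.keys p. ?t \<alpha>)"
  proof (rule sum.mono_neutral_left[OF finite_keys])
    show "(\<lambda>\<beta>. \<beta> + s) ` T \<subseteq> Poly_Mapping.keys p" by (auto simp: T_def)
    have "Poly_Mapping.lookup \<alpha> 0 = 0" if "\<alpha> \<in> Poly_Mapping.keys p - (\<lambda>\<beta>. \<beta> + s) ` T" for \<alpha>
    proof (rule ccontr)
      assume "Poly_Mapping.lookup \<alpha> 0 \<noteq> 0"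
      then have "\<alpha> = (\<alpha> - s) + s"
        by (intro poly_mapping_eqI) (auto simp: s_def lookup_add lookup_minus lookup_single when_def)
      then show False using that by (metis (no_types, lifting) DiffE T_def image_eqI vimageI)
    qed
    then show "\<forall>\<alpha>\<in>Poly_Mapping.keys p - (\<lambda>\<beta>. \<beta> + s) ` T. ?t \<alpha> = 0" by simp
  qed
  finally show ?thesis .
qed

lemma mpoly_diff_quot_same:
  "mpoly_diff_quot p B Z Z = mpoly_eval (pderiv_m 0 p) (B(0 := Z))"
  unfolding mpoly_eval_pderiv_m_0 mpoly_diff_quot_def matpow_diff_quot_same
  by (simp add: matrix_mul_assoc mat_mult_mat mult.commute)

lemma (in comm_ring_hom) map_matrix_mpoly_eval_pderiv_0:
  assumes "\<And>\<alpha> i. \<alpha> \<in> Poly_Mapping.keys p \<Longrightarrow> i \<in> Poly_Mapping.keys \<alpha> \<Longrightarrow> map_matrix \<phi> (B i) = B' i"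
    and "map_matrix \<phi> (B 0) = B' 0"
  shows "map_matrix \<phi> (mpoly_eval (pderiv_m 0 p) B) = mpoly_eval (pderiv_m 0 (Poly_Mapping.map \<phi> p)) B'"
proof -
  have "map_matrix \<phi> (mpoly_eval (pderiv_m 0 p) B) = map_matrix \<phi> (mpoly_diff_quot p B (B 0) (B 0))"
    by (simp add: mpoly_diff_quot_same)
  also have "\<dots> = mpoly_diff_quot (Poly_Mapping.map \<phi> p) B' (B' 0) (B' 0)"
    unfolding map_matrix_mpoly_diff_quot assms(2)
    by (rule mpoly_diff_quot_cong) (metis assms(1) keys_map_poly subsetD)
  also have "\<dots> = mpoly_eval (pderiv_m 0 (Poly_Mapping.map \<phi> p)) B'"
    by (simp add: mpoly_diff_quot_same)
  finally show ?thesis .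
qed

section \<open>Lifting from a cyclic reduction\<close>

lemma cyclic_vector_commute_eq:
  fixes M N P :: "'k::field^'n^'n"
  assumes span: "vec.span (range (\<lambda>j. matpow M j *v v)) = UNIV"
    and "M \<in> commutant {N, P}" and "N *v v = P *v v"
  shows "N = P"
proof -
  have "N ** matpow M j = matpow M j ** N" "P ** matpow M j = matpow M j ** P" for j
    using commutant_matpow[OF assms(2), of j] by (auto simp: commutant_iff)
  then have on_basis: "N *v (matpow M j *v v) = P *v (matpow M j *v v)" for j
    by (metis assms(3) matrix_vector_mul_assoc)
  have "N *v x = P *v x" for x
    by (rule vec.linear_eq_on_span[OF matrix_vector_mul_linear_gen matrix_vector_mul_linear_gen,
          where B = "range (\<lambda>j. matpow M j *v v)"]) (auto simp: span on_basis)
  then show "N = P" by (simp add: matrix_eq)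
qed

lemma cyclic_mat_commute_imp_poly:
  fixes M N :: "'k::field^'n^'n"
  assumes "cyclic_mat M" and "N ** M = M ** N"
  shows "\<exists>J c. finite J \<and> N = (\<Sum>j\<in>J. mat (c j) ** matpow M j)"
proof -
  obtain v where span: "vec.span (range (\<lambda>j. matpow M j *v v)) = UNIV"
    using assms(1) unfolding cyclic_mat_def by blast
  define f where "f j = matpow M j *v v" for j
  have "N *v v \<in> vec.span (range f)" using span by (simp add: f_def)
  then obtain T u where T: "finite T" "T \<subseteq> range f" "N *v v = (\<Sum>t\<in>T. u t *s t)"
    unfolding vec.span_explicit by blast
  obtain J where J: "inj_on f J" "T = f ` J"
    using T(2)[unfolded subset_image_inj] by blast
  define P where "P = (\<Sum>j\<in>J. mat (u (f j)) ** matpow M j)"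
  have "P \<in> commutant {M}"
    unfolding P_def
    by (intro commutant_sum commutant_mult commutant_mat commutant_matpow) (simp add: commutant_iff)
  then have "M \<in> commutant {N, P}"
    using assms(2) unfolding commutant_iff by (metis empty_iff insert_iff)
  moreover have "N *v v = P *v v"
    unfolding T(3) P_def J(2) sum.reindex[OF J(1)]
    by (simp add: matrix_vector_mult_sum mat_matrix_vector_mult f_def)
  ultimately have "N = P" by (rule cyclic_vector_commute_eq[OF span])
  moreover have "finite J" using T(1) J by (simp add: finite_image_iff)
  ultimately show ?thesis unfolding P_def by (intro exI[of _ J] exI[of _ "\<lambda>j. u (f j)"]) simp
qed

lemma lift_to_bicommutant:
  fixes \<phi> :: "'a::comm_ring_1 \<Rightarrow> 'k::field"
  assumes \<phi>: "comm_ring_hom \<phi>" "surj \<phi>" and "cyclic_mat (map_matrix \<phi> A)"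
    and "N \<in> commutant {map_matrix \<phi> A}"
  shows "\<exists>L\<in>bicommutant A. map_matrix \<phi> L = N"
proof -
  interpret \<phi>: comm_ring_hom \<phi> by (rule \<phi>(1))
  have "N ** map_matrix \<phi> A = map_matrix \<phi> A ** N"
    using assms(4) by (simp add: commutant_iff)
  then obtain J c where J: "finite J" "N = (\<Sum>j\<in>J. mat (c j) ** matpow (map_matrix \<phi> A) j)"
    using cyclic_mat_commute_imp_poly assms(3) by blast
  define L where "L = (\<Sum>j\<in>J. mat (inv \<phi> (c j)) ** matpow A j)"
  have "L \<in> bicommutant A"
    unfolding L_def by (intro commutant_sum commutant_mult commutant_mat commutant_matpow self_in_bicommutant)
  moreover have "map_matrix \<phi> L = N"
    unfolding L_def J(2)
    by (simp add: \<phi>.map_matrix_sum \<phi>.map_matrix_mult \<phi>.map_matrix_mat \<phi>.map_matrix_matpow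
        surj_f_inv_f[OF \<phi>(2)])
  ultimately show ?thesis by blast
qed

lemma lift_tuple_to_bicommutant:
  fixes \<phi> :: "'a::comm_ring_1 \<Rightarrow> 'k::field"
  assumes "comm_ring_hom \<phi>" "surj \<phi>" "cyclic_mat (map_matrix \<phi> A)"
    and "\<And>i. i < m \<Longrightarrow> Bt i \<in> commutant {map_matrix \<phi> A}"
  shows "\<exists>B. (\<forall>i. B i \<in> bicommutant A) \<and> (\<forall>i<m. map_matrix \<phi> (B i) = Bt i)"
proof -
  have "\<exists>L\<in>bicommutant A. i < m \<longrightarrow> map_matrix \<phi> L = Bt i" for i
    using lift_to_bicommutant[OF assms(1-3) assms(4)[of i]] self_in_bicommutant by blast
  then show ?thesis by metis
qed

lemma lift_inverse_to_bicommutant: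
  fixes \<phi> :: "'a::comm_ring_1 \<Rightarrow> 'k::field"
  assumes \<phi>: "comm_ring_hom \<phi>" "surj \<phi>" and cyc: "cyclic_mat (map_matrix \<phi> A)"
    and D: "D \<in> bicommutant A" "invertible (map_matrix \<phi> D)"
  shows "\<exists>U\<in>bicommutant A. map_matrix \<phi> U ** map_matrix \<phi> D = mat 1"
proof -
  interpret \<phi>: comm_ring_hom \<phi> by (rule \<phi>(1))
  obtain Di where Di: "map_matrix \<phi> D ** Di = mat 1" "Di ** map_matrix \<phi> D = mat 1"
    using D(2) unfolding invertible_def by blast
  have "D ** A = A ** D" by (rule bicommutant_commute[OF D(1) self_in_bicommutant])
  then have "map_matrix \<phi> D \<in> commutant {map_matrix \<phi> A}"
    by (simp add: commutant_iff flip: \<phi>.map_matrix_mult)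
  then have "Di \<in> commutant {map_matrix \<phi> A}"
    by (rule commutant_inverse[OF _ Di])
  then show ?thesis
    using lift_to_bicommutant[OF \<phi> cyc] Di(2) by blast
qed

section \<open>\<pi>-adic approximation\<close>

definition dvd_entries :: "'a::comm_ring_1 \<Rightarrow> 'a^'n^'m \<Rightarrow> bool" where
  "dvd_entries c M \<longleftrightarrow> (\<forall>i j. c dvd M $ i $ j)"

lemma dvd_entries_add: "dvd_entries c M \<Longrightarrow> dvd_entries c N \<Longrightarrow> dvd_entries c (M + N)"
  by (simp add: dvd_entries_def)

lemma dvd_entries_diff: "dvd_entries c M \<Longrightarrow> dvd_entries c N \<Longrightarrow> dvd_entries c (M - N)"
  by (simp add: dvd_entries_def)

lemma dvd_entries_uminus: "dvd_entries c M \<Longrightarrow> dvd_entries c (- M)"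
  by (simp add: dvd_entries_def)

lemma dvd_entries_trans: "c dvd d \<Longrightarrow> dvd_entries d M \<Longrightarrow> dvd_entries c M"
  unfolding dvd_entries_def by (meson dvd_trans)

lemma dvd_entries_power_Suc: "dvd_entries (c ^ Suc k) M \<Longrightarrow> dvd_entries (c ^ k) M"
  by (erule dvd_entries_trans[rotated]) simp

lemma dvd_entries_mult_left: "dvd_entries c N \<Longrightarrow> dvd_entries c ((M::'a::comm_ring_1^'n^'m) ** (N::'a^'p^'n))"
  unfolding dvd_entries_def matrix_matrix_mult_def by (auto intro!: dvd_sum dvd_mult)

lemma dvd_entries_mult_right: "dvd_entries c M \<Longrightarrow> dvd_entries c ((M::'a::comm_ring_1^'n^'m) ** (N::'a^'p^'n))"
  unfolding dvd_entries_def matrix_matrix_mult_def by (auto intro!: dvd_sum dvd_mult2)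

lemma dvd_entries_mult:
  "dvd_entries c M \<Longrightarrow> dvd_entries d N \<Longrightarrow> dvd_entries (c * d) ((M::'a::comm_ring_1^'n^'m) ** (N::'a^'p^'n))"
  unfolding dvd_entries_def matrix_matrix_mult_def by (auto intro!: dvd_sum mult_dvd_mono)

lemma residue_map_matrix_eq_iff:
  "residue_map \<pi> red \<Longrightarrow> map_matrix red M = map_matrix red N \<longleftrightarrow> dvd_entries \<pi> (M - N)"
proof -
  assume res: "residue_map \<pi> red"
  then interpret comm_ring_hom red by (rule residue_map_comm_ring_hom)
  have kernel: "red x = 0 \<longleftrightarrow> \<pi> dvd x" for x
    using res by (simp add: residue_map_def)
  show ?thesis
    by (simp add: dvd_entries_def map_matrix_def vec_eq_iff flip: kernel)
qed

lemma complete_wrt_eq_0: "complete_wrt \<pi> \<Longrightarrow> (\<And>k. dvd_entries (\<pi> ^ k) M) \<Longrightarrow> M = 0"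
  by (simp add: complete_wrt_def dvd_entries_def vec_eq_iff)

lemma complete_wrt_limit:
  fixes X :: "nat \<Rightarrow> 'a::comm_ring_1^'n^'m"
  assumes "complete_wrt \<pi>" and "\<And>k. dvd_entries (\<pi> ^ k) (X (Suc k) - X k)"
  shows "\<exists>L. \<forall>k. dvd_entries (\<pi> ^ k) (L - X k)"
proof -
  have "\<exists>x. \<forall>k. \<pi> ^ k dvd x - X k $ i $ j" for i j
    using assms unfolding complete_wrt_def dvd_entries_def by simp
  then obtain g where "\<And>i j k. \<pi> ^ k dvd g i j - X k $ i $ j" by metis
  then show ?thesis by (intro exI[of _ "\<chi> i j. g i j"]) (simp add: dvd_entries_def)
qed

lemma commutant_limit:
  assumes "complete_wrt \<pi>" and "\<And>k. X k \<in> commutant S" and "\<And>k. dvd_entries (\<pi> ^ k) (L - X k)"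
  shows "L \<in> commutant S"
  unfolding commutant_iff
proof
  fix N assume "N \<in> S"
  then have eq: "N ** L - L ** N = N ** (L - X k) - (L - X k) ** N" for k
    using assms(2) by (simp add: commutant_iff matrix_diff_ldistrib matrix_diff_rdistrib)
  have "dvd_entries (\<pi> ^ k) (N ** L - L ** N)" for k
    unfolding eq[of k]
    by (intro dvd_entries_diff dvd_entries_mult_left dvd_entries_mult_right assms(3))
  then show "N ** L = L ** N" using complete_wrt_eq_0[OF assms(1)] by fastforce
qed

section \<open>Newton iteration in the bicommutant\<close>

context
  fixes \<pi> :: "'a::comm_ring_1" and red :: "'a \<Rightarrow> 'k::field"
    and A :: "'a^'n^'n" and F :: "'a mpoly" and B :: "nat \<Rightarrow> 'a^'n^'n" and U :: "'a^'n^'n"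
  assumes res: "residue_map \<pi> red"
    and B: "\<And>i. B i \<in> bicommutant A" and U: "U \<in> bicommutant A"
    and U_inverse: "map_matrix red U ** map_matrix red (mpoly_eval (pderiv_m 0 F) B) = mat 1"
begin

interpretation red: comm_ring_hom red
  by (rule residue_map_comm_ring_hom[OF res])

lemma residue_mpoly_diff_quot:
  assumes "map_matrix red X = map_matrix red (B 0)" "map_matrix red Y = map_matrix red (B 0)"
  shows "map_matrix red (mpoly_diff_quot F B X Y) = map_matrix red (mpoly_eval (pderiv_m 0 F) B)"
proof -
  have "map_matrix red (mpoly_eval (pderiv_m 0 F) B) = map_matrix red (mpoly_diff_quot F B (B 0) (B 0))"
    by (simp add: mpoly_diff_quot_same)
  then show ?thesis by (simp add: red.map_matrix_mpoly_diff_quot assms)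
qed

lemma bicommutant_residual:
  "X \<in> bicommutant A \<Longrightarrow> mpoly_eval F (B(0 := X)) - A \<in> bicommutant A"
  using B by (intro commutant_diff commutant_mpoly_eval self_in_bicommutant) auto

lemma newton_step:
  assumes X: "X \<in> bicommutant A" "map_matrix red X = map_matrix red (B 0)"
    and err: "dvd_entries (\<pi> ^ Suc k) (mpoly_eval F (B(0 := X)) - A)"
  defines "X' \<equiv> X - U ** (mpoly_eval F (B(0 := X)) - A)"
  shows "X' \<in> bicommutant A" "map_matrix red X' = map_matrix red (B 0)"
    "dvd_entries (\<pi> ^ Suc (Suc k)) (mpoly_eval F (B(0 := X')) - A)"
proof -
  let ?G = "\<lambda>Y. mpoly_eval F (B(0 := Y)) - A"
  show X': "X' \<in> bicommutant A"
    unfolding X'_def by (intro commutant_diff commutant_mult X(1) U bicommutant_residual)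
  have "X - X' = U ** ?G X" by (simp add: X'_def)
  then have "dvd_entries (\<pi> ^ Suc k) (X - X')" by (metis dvd_entries_mult_left err)
  then have "dvd_entries \<pi> (X - X')" by (rule dvd_entries_trans[rotated]) simp
  then show red_X': "map_matrix red X' = map_matrix red (B 0)"
    using X(2) residue_map_matrix_eq_iff[OF res] by metis
  define D where "D = mpoly_diff_quot F B X' X"
  have D: "D \<in> bicommutant A" unfolding D_def by (intro commutant_mpoly_diff_quot B X' X(1))
  have diff: "?G X' = ?G X - (X - X') ** D"
    using mpoly_eval_diff_factor[OF bicommutant_commute[OF X' X(1)], of F B]
    by (simp add: D_def algebra_simps matrix_diff_rdistrib)
  have "(X - X') ** D = ?G X ** (U ** D)"
    using bicommutant_commute[OF U bicommutant_residual[OF X(1)]]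
    by (simp add: X'_def matrix_mul_assoc)
  then have "?G X' = ?G X ** (mat 1 - U ** D)"
    unfolding diff by (simp add: matrix_diff_ldistrib)
  moreover have "dvd_entries \<pi> (mat 1 - U ** D)"
    using U_inverse residue_map_matrix_eq_iff[OF res]
    by (metis red.map_matrix_mat red.map_matrix_mult red.hom_one residue_mpoly_diff_quot[OF red_X' X(2)] D_def)
  ultimately show "dvd_entries (\<pi> ^ Suc (Suc k)) (?G X')"
    using dvd_entries_mult[OF err] by (metis power_Suc2)
qed

lemma hensel_bicommutant:
  assumes complete: "complete_wrt \<pi>"
    and root: "map_matrix red (mpoly_eval F B) = map_matrix red A"
  shows "\<exists>L\<in>bicommutant A. map_matrix red L = map_matrix red (B 0) \<and> mpoly_eval F (B(0 := L)) = A"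
proof -
  let ?G = "\<lambda>Y. mpoly_eval F (B(0 := Y)) - A"
  define X where "X = rec_nat (B 0) (\<lambda>_ Y. Y - U ** ?G Y)"
  have X_Suc: "X (Suc k) = X k - U ** ?G (X k)" for k by (simp add: X_def)
  have X: "X k \<in> bicommutant A \<and> map_matrix red (X k) = map_matrix red (B 0) \<and>
      dvd_entries (\<pi> ^ Suc k) (?G (X k))" for k
  proof (induction k)
    case 0
    have "dvd_entries \<pi> (mpoly_eval F B - A)"
      by (metis residue_map_matrix_eq_iff[OF res] root)
    then show ?case using B by (simp add: X_def)
  next
    case (Suc k)
    then show ?case unfolding X_Suc using newton_step by blast
  qed
  have "dvd_entries (\<pi> ^ k) (X (Suc k) - X k)" for k
  proof -
    have "dvd_entries (\<pi> ^ Suc k) (U ** ?G (X k))" using X[of k] by (metis dvd_entries_mult_left)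
    then have "dvd_entries (\<pi> ^ k) (- (U ** ?G (X k)))"
      by (intro dvd_entries_uminus) (rule dvd_entries_power_Suc)
    then show ?thesis by (simp add: X_Suc)
  qed
  then obtain L where L: "\<And>k. dvd_entries (\<pi> ^ k) (L - X k)"
    using complete_wrt_limit[OF complete] by blast
  have L_bicommutant: "L \<in> bicommutant A"
    using commutant_limit[OF complete] X L by blast
  have "map_matrix red L = map_matrix red (B 0)"
    using L[of 1] X[of 1] residue_map_matrix_eq_iff[OF res] by (metis power_one_right)
  moreover have "?G L = 0"
  proof (rule complete_wrt_eq_0[OF complete])
    fix k
    have eq: "?G L = ?G (X k) + (L - X k) ** mpoly_diff_quot F B L (X k)"
      using mpoly_eval_diff_factor[OF bicommutant_commute[OF L_bicommutant], of "X k" F B] X[of k]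
      by (simp add: algebra_simps)
    have "dvd_entries (\<pi> ^ k) (?G (X k))"
      using X[of k] dvd_entries_power_Suc by blast
    then show "dvd_entries (\<pi> ^ k) (?G L)"
      unfolding eq by (intro dvd_entries_add dvd_entries_mult_right L)
  qed
  ultimately show ?thesis using L_bicommutant by auto
qed

end

theorem theorem2p5:
  fixes \<pi> :: "'a::comm_ring_1"
    and red :: "'a \<Rightarrow> 'k::field"
    and A :: "'a^'n^'n"
    and F :: "'a mpoly"
    and Bt :: "nat \<Rightarrow> 'k^'n^'n"
    and m r d :: nat
  assumes local_max: "\<forall>x. \<not> x dvd 1 \<longleftrightarrow> \<pi> dvd x"
    and pir: "principal_ideal_ring TYPE('a)"
    and complete: "complete_wrt \<pi>"
    and res: "residue_map \<pi> red"
    and char: "(2::'k) \<noteq> 0"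
    and cyc: "cyclic_mat (map_matrix red A)"
    and vars: "\<forall>\<alpha>\<in>Poly_Mapping.keys F. Poly_Mapping.keys \<alpha> \<subseteq> {..<m}"
    and monic: "monic_deg F d"
    and comm: "\<forall>i<m. \<forall>j<m. Bt i ** Bt j = Bt j ** Bt i"
    and root: "mpoly_eval (Poly_Mapping.map red F) Bt = map_matrix red A"
    and r: "1 \<le> r" "r \<le> m"
    and inv: "\<forall>i<r. invertible (mpoly_eval (pderiv_m i (Poly_Mapping.map red F)) Bt)"
    and zero: "\<forall>i. r \<le> i \<and> i < m \<longrightarrow> mpoly_eval (pderiv_m i (Poly_Mapping.map red F)) Bt = 0"
  shows "\<exists>B :: nat \<Rightarrow> 'a^'n^'n. (\<forall>i<m. \<forall>j<m. B i ** B j = B j ** B i) \<and>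
           (\<forall>i<m. map_matrix red (B i) = Bt i) \<and> mpoly_eval F B = A"
proof -
  interpret red: comm_ring_hom red by (rule residue_map_comm_ring_hom[OF res])
  have surj: "surj red" by (rule residue_map_surj[OF res])
  have "\<forall>\<alpha>\<in>Poly_Mapping.keys (Poly_Mapping.map red F). Poly_Mapping.keys \<alpha> \<subseteq> {..<m}"
    using vars red.keys_map_poly[of F] by auto
  then have "Bt i \<in> commutant {map_matrix red A}" if "i < m" for i
    unfolding root[symmetric] commutant_iff by (simp add: mpoly_eval_commute comm that)
  then obtain B0 where B0: "\<And>i. B0 i \<in> bicommutant A" "\<And>i. i < m \<Longrightarrow> map_matrix red (B0 i) = Bt i"
    using lift_tuple_to_bicommutant[OF red.comm_ring_hom_axioms surj cyc] by blast
  have B0_vars: "map_matrix red (B0 i) = Bt i" if "\<alpha> \<in> Poly_Mapping.keys F" "i \<in> Poly_Mapping.keys \<alpha>" for \<alpha> i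
    using that vars B0(2) by auto
  have root0: "map_matrix red (mpoly_eval F B0) = map_matrix red A"
    unfolding red.map_matrix_mpoly_eval root[symmetric]
    by (rule mpoly_eval_cong) (metis B0_vars red.keys_map_poly subsetD)
  have "map_matrix red (mpoly_eval (pderiv_m 0 F) B0) = mpoly_eval (pderiv_m 0 (Poly_Mapping.map red F)) Bt"
    using r by (intro red.map_matrix_mpoly_eval_pderiv_0 B0_vars B0(2)) auto
  then have "invertible (map_matrix red (mpoly_eval (pderiv_m 0 F) B0))"
    using inv r by simp
  then obtain U where U: "U \<in> bicommutant A"
      "map_matrix red U ** map_matrix red (mpoly_eval (pderiv_m 0 F) B0) = mat 1"
    using lift_inverse_to_bicommutant[OF red.comm_ring_hom_axioms surj cyc] B0(1) commutant_mpoly_eval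
    by blast
  obtain L where L: "L \<in> bicommutant A" "map_matrix red L = map_matrix red (B0 0)"
      "mpoly_eval F (B0(0 := L)) = A"
    using hensel_bicommutant[OF res B0(1) U complete root0] by blast
  have B: "(B0(0 := L)) i \<in> bicommutant A" for i using B0(1) L(1) by simp
  show ?thesis
    using bicommutant_commute[OF B B] B0(2) L(2,3) r by (intro exI[of _ "B0(0 := L)"]) auto
qed

end
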